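(* Let $q\geq 2$ be an integer and $\mathbf{r}=(r_1,\ldots,r_{q-1})\in\mathbb{N}_0^{q-1}$ with $r_1=\max\mathbf{r}$. Then $\mathscr{W}^{(q)}_{\mathbf{r}}\neq\emptyset$ if and only if both (i) $q\nmid\|\mathbf{r}\|$ and (ii) $\max\mathbf{r}\leq|\mathbf{r}|_q$.
   Context: A composition of $n\in\mathbb{N}_0$ is a finite sequence $\delta=(\delta_1,\ldots,\delta_s)$ of positive integers with $\sum_i\delta_i=n$; write $\ell(\delta)=s$; the unique composition of $0$ is the empty composition. Partial sums: $\delta^+_j=\sum_{i=1}^j\delta_i$. For a positive integer $q$, a composition $\delta$ is called $q'$-cumulative if it is nonempty and $q\nmid\delta^+_j$ for all $1\leq j\leq\ell(\delta)$. For $\mathbf{r}=(r_1,\ldots,r_{q-1})\in\mathbb{N}_0^{q-1}$, let $\mu$ be the partition with exactly $r_i$ parts equal to $i$ for each $1\le i\le q-1$ and no other parts, and let $\mathscr{W}^{(q)}_{\mathbf{r}}$ be the set of $q'$-cumulative compositions that are rearrangements of $\mu$. Define $\|\mathbf{r}\|=\sum_{i=1}^{q-1}ir_i$, $|\mathbf{r}|_q=(q-1)+\sum_{i=2}^{q-1}(q-i)r_i$, and $\max\mathbf{r}=\max\{r_1,\ldots,r_{q-1}\}$. *)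

theory Defs
  imports Main "HOL-Library.Multiset"
begin

text \<open>Compositions are lists of positive integers; partial sums are sums of prefixes.
  The tuple r = (r_1,...,r_{q-1}) is a function nat => nat of which only the
  values at 1..q-1 are used.\<close>

definition composition :: "nat list \<Rightarrow> bool" where
  "composition \<delta> \<longleftrightarrow> (\<forall>x\<in>set \<delta>. 0 < x)"

definition partial_sum :: "nat list \<Rightarrow> nat \<Rightarrow> nat" where
  "partial_sum \<delta> j = sum_list (take j \<delta>)"

definition q_cumulative :: "nat \<Rightarrow> nat list \<Rightarrow> bool" where
  "q_cumulative q \<delta> \<longleftrightarrow> composition \<delta> \<and> \<delta> \<noteq> [] \<and>
     (\<forall>j\<in>{1..length \<delta>}. \<not> q dvd partial_sum \<delta> j)"

definition mu_mset :: "nat \<Rightarrow> (nat \<Rightarrow> nat) \<Rightarrow> nat multiset" where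
  "mu_mset q r = (\<Sum>i\<in>{1..q-1}. replicate_mset (r i) i)"

definition W :: "nat \<Rightarrow> (nat \<Rightarrow> nat) \<Rightarrow> nat list set" where
  "W q r = {\<delta>. q_cumulative q \<delta> \<and> mset \<delta> = mu_mset q r}"

definition rnorm :: "nat \<Rightarrow> (nat \<Rightarrow> nat) \<Rightarrow> nat" where
  "rnorm q r = (\<Sum>i\<in>{1..q-1}. i * r i)"

definition rq :: "nat \<Rightarrow> (nat \<Rightarrow> nat) \<Rightarrow> nat" where
  "rq q r = (q - 1) + (\<Sum>i\<in>{2..q-1}. (q - i) * r i)"

definition rmax :: "nat \<Rightarrow> (nat \<Rightarrow> nat) \<Rightarrow> nat" where
  "rmax q r = Max (r ` {1..q-1})"

end

theory Submission
  imports Defs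
begin

(*
  Give a part x the weight 1 if x = 1 and x - q otherwise; then weight x = x (mod q), and the
  total weight of mu is r_1 - |r|_q + q - 1, so condition (ii) says that it is at most q - 1.
  Along a q'-cumulative arrangement the residue of the partial sums mod q grows at each step by
  at least the weight of the appended part, which gives (ii); (i) is the last partial sum.
  Conversely, an arrangement is built greedily, keeping track of the current residue t and the
  multiset R of parts still to be placed, and maintaining: t + sum R is not divisible by q, the
  potential t + weight R is at most q - 1, and 1 is a most frequent part of R.  One appends a
  part x <> 1 with t + x > q, or a 1 if it is strictly most frequent, or the pair 1, q - t, or a
  part x <> 1 with t + x < q when the potential is negative.  If none of these were possible, a
  part j <> 1 with t + j < q occurring at least as often as 1 would force the potential to be
  at most 0, hence 0 (it is congruent to t + sum R), contradicting the invariant.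
*)

fun avoids_multiples :: "nat \<Rightarrow> nat \<Rightarrow> nat list \<Rightarrow> bool" where
  "avoids_multiples q t [] \<longleftrightarrow> True"
| "avoids_multiples q t (x # \<delta>) \<longleftrightarrow> \<not> q dvd t + x \<and> avoids_multiples q (t + x) \<delta>"

lemma avoids_multiples_iff:
  "avoids_multiples q t \<delta> \<longleftrightarrow> (\<forall>j\<in>{1..length \<delta>}. \<not> q dvd t + sum_list (take j \<delta>))"
proof (induction \<delta> arbitrary: t)
  case (Cons x \<delta>)
  have indices: "{1..length (x # \<delta>)} = insert 1 (Suc ` {1..length \<delta>})"
    by (auto simp: image_iff)
  show ?case
    unfolding indices ball_simps Ball_image_comp comp_def by (simp add: Cons.IH add.assoc)
qed simp

lemma q_cumulative_iff:
  "q_cumulative q \<delta> \<longleftrightarrow> composition \<delta> \<and> \<delta> \<noteq> [] \<and> avoids_multiples q 0 \<delta>"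
  by (simp add: q_cumulative_def avoids_multiples_iff partial_sum_def)

lemma avoids_multiples_append:
  "avoids_multiples q t (xs @ ys) \<longleftrightarrow>
     avoids_multiples q t xs \<and> avoids_multiples q (t + sum_list xs) ys"
  by (induction xs arbitrary: t) (simp_all add: add.assoc)

lemma avoids_multiples_mod: "avoids_multiples q (t mod q) \<delta> \<longleftrightarrow> avoids_multiples q t \<delta>"
proof (induction \<delta> arbitrary: t)
  case (Cons x \<delta>)
  have "avoids_multiples q (t mod q + x) \<delta> \<longleftrightarrow> avoids_multiples q (t + x) \<delta>"
    using Cons.IH[of "t mod q + x"] Cons.IH[of "t + x"] by (simp add: mod_add_left_eq)
  then show ?case
    by (simp add: dvd_eq_mod_eq_0 mod_add_left_eq)
qed simp

lemma avoids_multiples_sum_list: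
  "avoids_multiples q t \<delta> \<Longrightarrow> \<delta> \<noteq> [] \<Longrightarrow> \<not> q dvd t + sum_list \<delta>"
proof (induction \<delta> arbitrary: t)
  case (Cons x \<delta>)
  then show ?case
    by (cases "\<delta> = []") (auto simp flip: add.assoc)
qed simp

lemma sum_mset_mu_mset:
  "(\<Sum>x\<in>#mu_mset q r. f x) = (\<Sum>i\<in>{1..q-1}. of_nat (r i) * (f i :: 'a :: comm_semiring_1))"
proof -
  have "(\<Sum>x\<in>#(\<Sum>i\<in>A. replicate_mset (r i) i). f x) = (\<Sum>i\<in>A. of_nat (r i) * f i)" for A
    by (induction A rule: infinite_finite_induct) auto
  then show ?thesis
    by (simp add: mu_mset_def)
qed

lemma count_mu_mset: "count (mu_mset q r) i = (if i \<in> {1..q-1} then r i else 0)"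
  by (simp add: mu_mset_def count_sum)

lemma set_mu_mset: "set_mset (mu_mset q r) \<subseteq> {1..q-1}"
  by (auto simp: count_mu_mset simp flip: count_greater_zero_iff split: if_splits)

lemma sum_mset_mu_mset_eq_rnorm: "\<Sum>\<^sub># (mu_mset q r) = rnorm q r"
  using sum_mset_mu_mset[where f = id] by (simp add: rnorm_def mult.commute)

lemma sum_list_eq_rnorm: "mset \<delta> = mu_mset q r \<Longrightarrow> sum_list \<delta> = rnorm q r"
  by (metis sum_mset_mu_mset_eq_rnorm sum_mset_sum_list)

lemma W_eq: "W q r = {\<delta>. mset \<delta> = mu_mset q r \<and> \<delta> \<noteq> [] \<and> avoids_multiples q 0 \<delta>}"
  using set_mu_mset[of q r]
  by (auto simp: W_def q_cumulative_iff composition_def simp flip: set_mset_mset)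

section \<open>Weights and the potential\<close>

definition weight :: "nat \<Rightarrow> nat \<Rightarrow> int" where
  "weight q x = (if x = 1 then 1 else int x - int q)"

definition potential :: "nat \<Rightarrow> nat \<Rightarrow> nat multiset \<Rightarrow> int" where
  "potential q t R = int t + (\<Sum>x\<in>#R. weight q x)"

lemma potential_empty [simp]: "potential q t {#} = int t"
  by (simp add: potential_def)

lemma potential_add_mset [simp]:
  "potential q t (add_mset x R) = weight q x + potential q t R"
  by (simp add: potential_def)

lemma potential_cong: "int q dvd int (t + \<Sum>\<^sub># R) - potential q t R"
proof (induction R)
  case (add x R)
  have "int q dvd int x - weight q x"
    by (simp add: weight_def)
  from dvd_add[OF this add.IH] show ?case
    by (simp add: algebra_simps)
qed simp

lemma potential_eq:
  assumes "set_mset R \<subseteq> {..q}"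
  shows "potential q t R = int t + int (count R 1) - int (\<Sum>x\<in>#filter_mset (\<lambda>x. x \<noteq> 1) R. q - x)"
  using assms by (induction R) (auto simp: weight_def of_nat_diff)

lemma count_mult_le_sum_mset:
  "i \<noteq> 1 \<Longrightarrow> count R i * (q - i) \<le> (\<Sum>x\<in>#filter_mset (\<lambda>x. x \<noteq> 1) R. q - x)"
  by (induction R) auto

lemma potential_diff:
  assumes "mset xs \<subseteq># R"
  shows "potential q s (R - mset xs) = potential q t R + int s - int t - (\<Sum>x\<leftarrow>xs. weight q x)"
proof -
  from assms obtain R' where "R = mset xs + R'"
    by (auto simp: mset_subset_eq_exists_conv)
  then show ?thesis
    by (simp add: potential_def sum_mset_sum_list flip: mset_map)
qed

lemma potential_mu_mset:
  assumes "2 \<le> q"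
  shows "potential q 0 (mu_mset q r) = int (r 1) - int (rq q r) + int q - 1"
proof -
  have "{1..q-1} = insert 1 {2..q-1}"
    using assms by auto
  then have "potential q 0 (mu_mset q r) = int (r 1) + (\<Sum>i\<in>{2..q-1}. int (r i) * weight q i)"
    by (simp add: potential_def sum_mset_mu_mset weight_def)
  also have "(\<Sum>i\<in>{2..q-1}. int (r i) * weight q i) = (\<Sum>i\<in>{2..q-1}. - int ((q - i) * r i))"
  proof (intro sum.cong)
    fix i assume "i \<in> {2..q-1}"
    then have "int (q - i) = int q - int i"
      by auto
    with \<open>i \<in> {2..q-1}\<close> show "int (r i) * weight q i = - int ((q - i) * r i)"
      by (simp add: weight_def algebra_simps)
  qed simp
  finally show ?thesis
    using assms by (simp add: rq_def of_nat_diff sum_negf)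
qed

section \<open>Necessity\<close>

lemma weight_le_residue_step:
  assumes "t < q" "x \<in> {1..q-1}" "\<not> q dvd t + x"
  shows "int t + weight q x \<le> int ((t + x) mod q)"
proof (cases "x = 1")
  case True
  with assms have "t + 1 < q"
    by (metis Suc_eq_plus1 Suc_lessI dvd_refl)
  with True show ?thesis
    by (simp add: weight_def)
next
  case False
  from assms have "t + x < 2 * q"
    by auto
  then have "t + x - q \<le> (t + x) mod q"
    by (simp add: le_mod_geq mod_if)
  with False show ?thesis
    by (simp add: weight_def)
qed

lemma potential_le_of_avoids_multiples:
  assumes "t < q" "set \<delta> \<subseteq> {1..q-1}" "avoids_multiples q t \<delta>"
  shows "potential q t (mset \<delta>) \<le> int q - 1"
  using assms
proof (induction \<delta> arbitrary: t)
  case (Cons x \<delta>)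
  then have "potential q ((t + x) mod q) (mset \<delta>) \<le> int q - 1"
    by (simp add: avoids_multiples_mod)
  moreover have "int t + weight q x \<le> int ((t + x) mod q)"
    using Cons.prems by (intro weight_le_residue_step) auto
  ultimately show ?case
    by (simp add: potential_def)
qed simp

section \<open>Greedy construction\<close>

definition admissible :: "nat \<Rightarrow> nat \<Rightarrow> nat multiset \<Rightarrow> bool" where
  "admissible q t R \<longleftrightarrow> set_mset R \<subseteq> {1..q-1} \<and> t < q \<and>
     (R \<noteq> {#} \<longrightarrow> \<not> q dvd t + \<Sum>\<^sub># R) \<and> potential q t R \<le> int q - 1 \<and>
     (\<forall>i. count R i \<le> count R 1)"

lemma admissibleD:
  assumes "admissible q t R"
  shows "t < q" "R \<noteq> {#} \<Longrightarrow> \<not> q dvd t + \<Sum>\<^sub># R" "potential q t R \<le> int q - 1"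
    "count R i \<le> count R 1" "x \<in># R \<Longrightarrow> 1 \<le> x" "x \<in># R \<Longrightarrow> x < q"
proof -
  have "x \<in># R \<Longrightarrow> x \<in> {1..q-1}"
    using assms by (auto simp: admissible_def)
  then show "x \<in># R \<Longrightarrow> 1 \<le> x" "x \<in># R \<Longrightarrow> x < q"
    by auto
qed (use assms in \<open>auto simp: admissible_def\<close>)

lemma admissible_subset_atMost: "admissible q t R \<Longrightarrow> set_mset R \<subseteq> {..q}"
  by (auto dest: admissibleD(6))

lemma admissible_count_one_pos:
  assumes "admissible q t R" "R \<noteq> {#}"
  shows "0 < count R 1"
proof -
  from \<open>R \<noteq> {#}\<close> obtain y where "y \<in># R"
    by blast
  then have "0 < count R y"
    by simp
  then show ?thesis
    using admissibleD(4)[OF assms(1), of y] by linarith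
qed

definition admissible_move :: "nat \<Rightarrow> nat \<Rightarrow> nat multiset \<Rightarrow> nat list \<Rightarrow> bool" where
  "admissible_move q t R xs \<longleftrightarrow> xs \<noteq> [] \<and> mset xs \<subseteq># R \<and> avoids_multiples q t xs \<and>
     admissible q ((t + sum_list xs) mod q) (R - mset xs)"

lemma admissible_moveI:
  assumes adm: "admissible q t R" and sub: "mset xs \<subseteq># R"
    and "xs \<noteq> []" "avoids_multiples q t xs"
    and "potential q ((t + sum_list xs) mod q) (R - mset xs) \<le> int q - 1"
    and "\<forall>i. count (R - mset xs) i \<le> count (R - mset xs) 1"
  shows "admissible_move q t R xs"
proof -
  from sub obtain R' where R: "R = mset xs + R'"
    by (auto simp: mset_subset_eq_exists_conv)
  have "\<not> q dvd (t + sum_list xs) mod q + \<Sum>\<^sub># R'" if "R' \<noteq> {#}"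
  proof -
    have "\<not> q dvd t + sum_list xs + \<Sum>\<^sub># R'"
      using admissibleD(2)[OF adm] that by (simp add: R sum_mset_sum_list add.assoc)
    then show ?thesis
      by (simp add: dvd_eq_mod_eq_0 mod_add_left_eq)
  qed
  moreover have "set_mset R' \<subseteq> set_mset R" "0 < q"
    using admissibleD(1)[OF adm] by (auto simp: R)
  ultimately show ?thesis
    using assms by (auto simp: admissible_move_def admissible_def R)
qed

lemma dominance_diff_single:
  assumes "\<And>i. count R i \<le> count R 1" "x \<noteq> 1"
  shows "\<forall>i. count (R - {#x#}) i \<le> count (R - {#x#}) 1"
  using assms by (simp add: le_diff_conv le_SucI)

lemma admissible_move_wrapping:
  assumes adm: "admissible q t R" and x: "x \<in># R" "x \<noteq> 1" "q < t + x"
  shows "admissible_move q t R [x]"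
proof (rule admissible_moveI[OF adm])
  have "t < q" "x < q"
    using admissibleD(1)[OF adm] admissibleD(6)[OF adm x(1)] .
  then have mod: "(t + x) mod q = t + x - q"
    using x(3) by (simp add: le_mod_geq)
  have "\<not> q dvd t + x"
    using \<open>t < q\<close> \<open>x < q\<close> x(3) unfolding dvd_eq_mod_eq_0 mod by linarith
  then show "avoids_multiples q t [x]"
    by simp
  show "potential q ((t + sum_list [x]) mod q) (R - mset [x]) \<le> int q - 1"
    using potential_diff[of "[x]" R q "t + x - q" t] x admissibleD(3)[OF adm]
    by (simp add: weight_def mod of_nat_diff)
  show "\<forall>i. count (R - mset [x]) i \<le> count (R - mset [x]) 1"
    using dominance_diff_single[OF admissibleD(4)[OF adm] x(2)] by simp
qed (use x in simp_all)

lemma admissible_move_non_wrapping: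
  assumes adm: "admissible q t R" and x: "x \<in># R" "x \<noteq> 1" "t + x < q"
    and neg: "potential q t R \<le> -1"
  shows "admissible_move q t R [x]"
proof (rule admissible_moveI[OF adm])
  show "avoids_multiples q t [x]"
    using admissibleD(5)[OF adm x(1)] x(3) by (simp add: nat_dvd_not_less)
  show "potential q ((t + sum_list [x]) mod q) (R - mset [x]) \<le> int q - 1"
    using potential_diff[of "[x]" R q "t + x" t] x neg by (simp add: weight_def)
  show "\<forall>i. count (R - mset [x]) i \<le> count (R - mset [x]) 1"
    using dominance_diff_single[OF admissibleD(4)[OF adm] x(2)] by simp
qed (use x in simp_all)

lemma admissible_move_one:
  assumes adm: "admissible q t R" and "t + 1 < q"
    and dom: "\<forall>i. i \<noteq> 1 \<longrightarrow> count R i < count R 1"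
  shows "admissible_move q t R [1]"
proof (rule admissible_moveI[OF adm])
  have "1 \<in># R"
    using dom[rule_format, of 0] by (simp flip: count_greater_zero_iff)
  then show "mset [1] \<subseteq># R"
    by simp
  show "potential q ((t + sum_list [1]) mod q) (R - mset [1]) \<le> int q - 1"
    using potential_diff[of "[1]" R q "t + 1" t] \<open>1 \<in># R\<close> \<open>t + 1 < q\<close> admissibleD(3)[OF adm]
    by (simp add: weight_def)
  show "\<forall>i. count (R - mset [1]) i \<le> count (R - mset [1]) 1"
  proof
    fix i
    show "count (R - mset [1]) i \<le> count (R - mset [1]) 1"
      using dom[rule_format, of i] by (cases "i = 1") auto
  qed
  show "avoids_multiples q t [1]"
    using \<open>t + 1 < q\<close> by (simp add: nat_dvd_not_less)
qed simp

lemma admissible_move_pair: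
  assumes adm: "admissible q t R" and "t + 1 < q" and "q - t \<in># R"
    and dom: "\<forall>i. i \<noteq> 1 \<and> i \<noteq> q - t \<longrightarrow> count R i < count R 1"
  shows "admissible_move q t R [1, q - t]"
proof (rule admissible_moveI[OF adm])
  have "q - t \<noteq> 1"
    using \<open>t + 1 < q\<close> by linarith
  have "count R (q - t) \<le> count R 1"
    by (rule admissibleD(4)[OF adm])
  moreover have "0 < count R (q - t)"
    using \<open>q - t \<in># R\<close> by simp
  ultimately have "1 \<in># R"
    by (simp flip: count_greater_zero_iff)
  then show sub: "mset [1, q - t] \<subseteq># R"
    using \<open>q - t \<in># R\<close> \<open>q - t \<noteq> 1\<close> by (simp add: insert_subset_eq_iff in_diff_count)
  have sum: "t + sum_list [1, q - t] = q + 1"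
    using \<open>t + 1 < q\<close> by simp
  then have mod: "(t + sum_list [1, q - t]) mod q = 1"
    using \<open>t + 1 < q\<close> mod_add_self1[of q 1] by simp
  show "potential q ((t + sum_list [1, q - t]) mod q) (R - mset [1, q - t]) \<le> int q - 1"
    using potential_diff[OF sub, of q 1 t] admissibleD(3)[OF adm] \<open>q - t \<noteq> 1\<close> \<open>t + 1 < q\<close>
    unfolding mod by (simp add: weight_def of_nat_diff)
  show "\<forall>i. count (R - mset [1, q - t]) i \<le> count (R - mset [1, q - t]) 1"
  proof
    fix i
    show "count (R - mset [1, q - t]) i \<le> count (R - mset [1, q - t]) 1"
      using dom[rule_format, of i] \<open>count R (q - t) \<le> count R 1\<close> \<open>q - t \<noteq> 1\<close>
      by (cases "i = 1 \<or> i = q - t") (auto simp: diff_le_mono)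
  qed
  have "\<not> q dvd q + 1"
    using \<open>t + 1 < q\<close> dvd_add_right_iff[of q q 1] by simp
  with sum have "\<not> q dvd t + 1 + (q - t)"
    by simp
  moreover have "\<not> q dvd t + 1"
    using \<open>t + 1 < q\<close> by (simp add: nat_dvd_not_less)
  ultimately show "avoids_multiples q t [1, q - t]"
    by simp
qed simp

lemma admissible_residue_bound:
  assumes adm: "admissible q t R" and "R \<noteq> {#}"
    and bounded: "\<forall>x\<in>#R. x \<noteq> 1 \<longrightarrow> t + x \<le> q"
  shows "t + 1 < q"
proof (rule ccontr)
  assume "\<not> t + 1 < q"
  with admissibleD(1)[OF adm] have "t + 1 = q"
    by linarith
  have no_others: "filter_mset (\<lambda>x. x \<noteq> 1) R = {#}"
  proof (rule ccontr)
    assume "filter_mset (\<lambda>x. x \<noteq> 1) R \<noteq> {#}"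
    then obtain x where "x \<in># R" "x \<noteq> 1"
      by (auto simp: filter_mset_eq_mempty_iff)
    with bounded have "t + x \<le> q"
      by blast
    with admissibleD(5)[OF adm \<open>x \<in># R\<close>] \<open>x \<noteq> 1\<close> \<open>t + 1 = q\<close> show False
      by linarith
  qed
  have "potential q t R = int t + int (count R 1)"
    using potential_eq[OF admissible_subset_atMost[OF adm], of t] unfolding no_others by simp
  moreover have "0 < count R 1"
    using adm \<open>R \<noteq> {#}\<close> by (rule admissible_count_one_pos)
  ultimately show False
    using admissibleD(3)[OF adm] \<open>t + 1 = q\<close> by linarith
qed

lemma admissible_potential_negative:
  assumes adm: "admissible q t R"
    and j: "j \<in># R" "j \<noteq> 1" "t + j < q" "count R 1 \<le> count R j"
  shows "potential q t R \<le> -1"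
proof -
  have "0 < count R 1"
    using admissibleD(4)[OF adm, of j] j(1) by (simp flip: count_greater_zero_iff)
  then have "t + count R 1 \<le> count R 1 * (t + 1)"
    by (simp add: algebra_simps)
  also have "\<dots> \<le> count R j * (q - j)"
    using j by (intro mult_mono) auto
  also have "\<dots> \<le> (\<Sum>x\<in>#filter_mset (\<lambda>x. x \<noteq> 1) R. q - x)"
    using j(2) by (rule count_mult_le_sum_mset)
  finally have "potential q t R \<le> 0"
    using potential_eq[OF admissible_subset_atMost[OF adm], of t] by linarith
  moreover have "\<not> q dvd t + \<Sum>\<^sub># R"
    using admissibleD(2)[OF adm] j(1) by force
  then have "potential q t R \<noteq> 0"
    using potential_cong[of q t R] by (auto simp flip: int_dvd_int_iff)
  ultimately show ?thesis
    by linarith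
qed

lemma admissible_move_exists:
  assumes adm: "admissible q t R" and "R \<noteq> {#}"
  obtains xs where "admissible_move q t R xs"
proof (cases "\<exists>x\<in>#R. x \<noteq> 1 \<and> q < t + x")
  case True
  then show ?thesis
    using admissible_move_wrapping[OF adm] that by blast
next
  case False
  then have bounded: "\<forall>x\<in>#R. x \<noteq> 1 \<longrightarrow> t + x \<le> q"
    by auto
  have "t + 1 < q"
    using admissible_residue_bound[OF adm \<open>R \<noteq> {#}\<close> bounded] .
  have one_pos: "0 < count R 1"
    using admissible_count_one_pos[OF adm \<open>R \<noteq> {#}\<close>] .
  consider (one) "\<forall>i. i \<noteq> 1 \<longrightarrow> count R i < count R 1"
    | (pair) "q - t \<in># R" "\<forall>i. i \<noteq> 1 \<and> i \<noteq> q - t \<longrightarrow> count R i < count R 1"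
    | (other) j where "j \<noteq> 1" "j \<noteq> q - t" "count R 1 \<le> count R j"
    using one_pos by (metis count_eq_zero_iff not_le not_less0)
  then show ?thesis
  proof cases
    case one
    then show ?thesis
      using admissible_move_one[OF adm \<open>t + 1 < q\<close>] that by blast
  next
    case pair
    then show ?thesis
      using admissible_move_pair[OF adm \<open>t + 1 < q\<close>] that by blast
  next
    case (other j)
    then have "j \<in># R"
      using one_pos by (simp flip: count_greater_zero_iff)
    with bounded other(1,2) have "t + j < q"
      by fastforce
    then show ?thesis
      using admissible_move_non_wrapping[OF adm \<open>j \<in># R\<close> \<open>j \<noteq> 1\<close>]
        admissible_potential_negative[OF adm \<open>j \<in># R\<close> \<open>j \<noteq> 1\<close> _ \<open>count R 1 \<le> count R j\<close>] that
      by blast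
  qed
qed

lemma admissible_arrangement:
  assumes "admissible q t R"
  shows "\<exists>\<delta>. mset \<delta> = R \<and> avoids_multiples q t \<delta>"
  using assms
proof (induction "size R" arbitrary: t R rule: less_induct)
  case less
  show ?case
  proof (cases "R = {#}")
    case False
    then obtain xs where xs: "admissible_move q t R xs"
      using admissible_move_exists[OF less.prems] by blast
    then have "mset xs \<subseteq># R" "xs \<noteq> []"
      by (simp_all add: admissible_move_def)
    then have "size (R - mset xs) < size R"
      using size_mset_mono[of "mset xs" R]
      by (simp add: size_Diff_submset) (metis diff_less length_greater_0_conv less_le_trans)
    with xs obtain \<delta> where "mset \<delta> = R - mset xs"
      "avoids_multiples q ((t + sum_list xs) mod q) \<delta>"
      using less.hyps unfolding admissible_move_def by blast
    with xs show ?thesis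
      by (intro exI[of _ "xs @ \<delta>"])
        (auto simp: admissible_move_def avoids_multiples_append avoids_multiples_mod)
  qed simp
qed

lemma admissible_mu_mset:
  assumes "2 \<le> q" "r 1 = rmax q r" "\<not> q dvd rnorm q r" "rmax q r \<le> rq q r"
  shows "admissible q 0 (mu_mset q r)"
proof -
  have "count (mu_mset q r) i \<le> count (mu_mset q r) 1" for i
    using assms(1,2) by (auto simp: count_mu_mset rmax_def)
  then show ?thesis
    using assms set_mu_mset[of q r]
    by (auto simp: admissible_def sum_mset_mu_mset_eq_rnorm potential_mu_mset)
qed

theorem lemma1:
  fixes q :: nat and r :: "nat \<Rightarrow> nat"
  assumes "q \<ge> 2" and "r 1 = rmax q r"
  shows "W q r \<noteq> {} \<longleftrightarrow> (\<not> q dvd rnorm q r \<and> rmax q r \<le> rq q r)"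
proof
  assume "W q r \<noteq> {}"
  then obtain \<delta> where \<delta>: "mset \<delta> = mu_mset q r" "\<delta> \<noteq> []" "avoids_multiples q 0 \<delta>"
    by (auto simp: W_eq)
  then have "\<not> q dvd rnorm q r"
    using avoids_multiples_sum_list[OF \<delta>(3,2)] sum_list_eq_rnorm[OF \<delta>(1)] by simp
  moreover have "potential q 0 (mset \<delta>) \<le> int q - 1"
    using \<delta> set_mu_mset[of q r] assms(1)
    by (intro potential_le_of_avoids_multiples) (auto simp flip: set_mset_mset)
  ultimately show "\<not> q dvd rnorm q r \<and> rmax q r \<le> rq q r"
    using potential_mu_mset[OF assms(1), of r] \<delta>(1) assms(2) by simp
next
  assume conds: "\<not> q dvd rnorm q r \<and> rmax q r \<le> rq q r"
  then obtain \<delta> where \<delta>: "mset \<delta> = mu_mset q r" "avoids_multiples q 0 \<delta>"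
    using admissible_arrangement admissible_mu_mset assms by blast
  moreover have "\<delta> \<noteq> []"
    using sum_list_eq_rnorm[OF \<delta>(1)] conds by auto
  ultimately show "W q r \<noteq> {}"
    by (auto simp: W_eq)
qed

end
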